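(* Consider the integer quadratic program: minimize $x^TQx$ subject to $Ax\le b$, $Cx=d$, $x\in\mathbb{Z}^n$. Suppose this program has an optimal solution, all of its optimal solutions are deep, and for every $y_i\in Y$ the row vector $y_i^TQ$ is linearly dependent on the rows of $C$. Then for every optimal solution $x^\star$ and every integer vector $\lambda\in\mathbb{Z}^r$, the vector $x^\star+Y\lambda$ is also an optimal solution.
   Context: Setting: $Q$ is an $n\times n$ integer symmetric matrix, $A$ an $m\times n$ integer matrix, $b\in\mathbb{Z}^m$, $C$ an integer matrix with $n$ columns and linearly independent rows, and $d$ an integer vector. $\Delta$ is the maximum absolute value of the determinant of a square submatrix of $C$. $y_1,\dots,y_r$ is a basis of the nullspace of $C$ consisting of integer vectors with $|y_i|_\infty\le\Delta^2$; $Y$ denotes both the set of these vectors and the $n\times r$ matrix with columns $y_1,\dots,y_r$. A feasible solution is an $x\in\mathbb{Z}^n$ with $Ax\le b$ and $Cx=d$; an optimal solution is a feasible solution minimizing $x^TQx$. A feasible solution $x$ is deep if $x+y_i$ and $x-y_i$ are feasible for all $y_i\in Y$. *)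

theory Defs
  imports "Jordan_Normal_Form.Determinant" "Jordan_Normal_Form.DL_Submatrix"
begin

text \<open>Vectors and matrices are Jordan_Normal_Form vec/mat with explicit dimensions.
  Integer data is embedded into the reals (via map_mat/map_vec of_int) for linear-algebra notions.\<close>

definition rmat :: "int mat \<Rightarrow> real mat" where
  "rmat M = map_mat real_of_int M"

definition rvec :: "int vec \<Rightarrow> real vec" where
  "rvec v = map_vec real_of_int v"

definition rows_lin_indep :: "int mat \<Rightarrow> bool" where
  "rows_lin_indep C \<longleftrightarrow>
     (\<forall>u \<in> carrier_vec (dim_row C). transpose_mat (rmat C) *\<^sub>v u = 0\<^sub>v (dim_col C) \<longrightarrow> u = 0\<^sub>v (dim_row C))"

definition max_subdet :: "int mat \<Rightarrow> int" where
  "max_subdet C = Max {\<bar>det (submatrix C I J)\<bar> | I J.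
       I \<subseteq> {0..<dim_row C} \<and> J \<subseteq> {0..<dim_col C} \<and> card I = card J}"

definition nullspace_basis :: "int mat \<Rightarrow> int mat \<Rightarrow> bool" where
  "nullspace_basis C Y \<longleftrightarrow>
     dim_row Y = dim_col C \<and>
     C * Y = 0\<^sub>m (dim_row C) (dim_col Y) \<and>
     (\<forall>c \<in> carrier_vec (dim_col Y). rmat Y *\<^sub>v c = 0\<^sub>v (dim_row Y) \<longrightarrow> c = 0\<^sub>v (dim_col Y)) \<and>
     (\<forall>z \<in> carrier_vec (dim_col C). rmat C *\<^sub>v z = 0\<^sub>v (dim_row C) \<longrightarrow>
        (\<exists>c \<in> carrier_vec (dim_col Y). z = rmat Y *\<^sub>v c))"

definition feasible :: "int mat \<Rightarrow> int vec \<Rightarrow> int mat \<Rightarrow> int vec \<Rightarrow> int vec \<Rightarrow> bool" where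
  "feasible A b C d x \<longleftrightarrow> x \<in> carrier_vec (dim_col A) \<and>
     (\<forall>i < dim_row A. (A *\<^sub>v x) $ i \<le> b $ i) \<and> C *\<^sub>v x = d"

definition objective :: "int mat \<Rightarrow> int vec \<Rightarrow> int" where
  "objective Q x = x \<bullet> (Q *\<^sub>v x)"

definition optimal :: "int mat \<Rightarrow> int mat \<Rightarrow> int vec \<Rightarrow> int mat \<Rightarrow> int vec \<Rightarrow> int vec \<Rightarrow> bool" where
  "optimal Q A b C d x \<longleftrightarrow> feasible A b C d x \<and>
     (\<forall>z. feasible A b C d z \<longrightarrow> objective Q x \<le> objective Q z)"

definition deep :: "int mat \<Rightarrow> int vec \<Rightarrow> int mat \<Rightarrow> int vec \<Rightarrow> int mat \<Rightarrow> int vec \<Rightarrow> bool" where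
  "deep A b C d Y x \<longleftrightarrow> feasible A b C d x \<and>
     (\<forall>i < dim_col Y. feasible A b C d (x + col Y i) \<and> feasible A b C d (x - col Y i))"

end

theory Submission
  imports Defs
begin

text \<open>For an optimal deep solution z and a null vector y of C with Q y in the row space of C,
  the form y^T Q y equals u^T C y = 0, so the objective is affine along the line z + t y:
  f(z \<plusminus> y) = f(z) \<plusminus> 2 y^T Q z. Both neighbours are feasible and f(z) is minimal,
  hence f(z + y) = f(z). Optimality is thus preserved by adding or subtracting any column
  of Y, and by induction by adding any integer combination Y \<lambda>.\<close>

lemma rvec_scalar_prod:
  assumes "v \<in> carrier_vec n" "w \<in> carrier_vec n"
  shows "real_of_int (v \<bullet> w) = rvec v \<bullet> rvec w"
  using assms by (simp add: scalar_prod_def rvec_def of_int_sum)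

lemma rvec_mult_mat_vec:
  assumes "M \<in> carrier_mat k n" "v \<in> carrier_vec n"
  shows "rvec (M *\<^sub>v v) = rmat M *\<^sub>v rvec v"
  using of_int_hom.mult_mat_vec_hom[OF assms] by (simp add: rvec_def rmat_def)

lemma quadratic_form_vanishes_on_nullspace:
  fixes Q C :: "int mat" and y :: "int vec"
  assumes Q: "Q \<in> carrier_mat n n" and C: "C \<in> carrier_mat p n" and y: "y \<in> carrier_vec n"
    and Cy: "C *\<^sub>v y = 0\<^sub>v p" and u: "u \<in> carrier_vec p"
    and dep: "transpose_mat (rmat Q) *\<^sub>v rvec y = transpose_mat (rmat C) *\<^sub>v u"
  shows "y \<bullet> (Q *\<^sub>v y) = 0"
proof -
  have rQ: "rmat Q \<in> carrier_mat n n" and rC: "rmat C \<in> carrier_mat p n"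
    and ry: "rvec y \<in> carrier_vec n"
    using Q C y by (auto simp: rmat_def rvec_def)
  have "real_of_int (y \<bullet> (Q *\<^sub>v y)) = rvec y \<bullet> (rmat Q *\<^sub>v rvec y)"
    using rvec_scalar_prod[OF y, of "Q *\<^sub>v y"] rvec_mult_mat_vec[OF Q y] mult_mat_vec_carrier[OF Q y] by simp
  also have "\<dots> = (transpose_mat (rmat Q) *\<^sub>v rvec y) \<bullet> rvec y"
    using transpose_vec_mult_scalar[OF rQ ry ry] by simp
  also have "\<dots> = u \<bullet> (rmat C *\<^sub>v rvec y)"
    unfolding dep using transpose_vec_mult_scalar[OF rC ry u] by simp
  also have "rmat C *\<^sub>v rvec y = 0\<^sub>v p"
    using rvec_mult_mat_vec[OF C y] Cy by (metis of_int_hom.vec_hom_zero rvec_def)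
  finally show ?thesis using u by simp
qed

lemma objective_add:
  fixes Q :: "int mat"
  assumes Q: "Q \<in> carrier_mat n n" and Qsym: "transpose_mat Q = Q"
    and z: "z \<in> carrier_vec n" and y: "y \<in> carrier_vec n"
  shows "objective Q (z + y) = objective Q z + 2 * (y \<bullet> (Q *\<^sub>v z)) + y \<bullet> (Q *\<^sub>v y)"
proof -
  have Qz: "Q *\<^sub>v z \<in> carrier_vec n" and Qy: "Q *\<^sub>v y \<in> carrier_vec n" using Q z y by auto
  have "z \<bullet> (Q *\<^sub>v y) = y \<bullet> (Q *\<^sub>v z)"
    using transpose_vec_mult_scalar[OF Q y z] Qsym comm_scalar_prod[OF Qz y] by simp
  moreover have "objective Q (z + y)
      = z \<bullet> (Q *\<^sub>v z) + z \<bullet> (Q *\<^sub>v y) + (y \<bullet> (Q *\<^sub>v z) + y \<bullet> (Q *\<^sub>v y))"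
    unfolding objective_def using Q z y Qz Qy
    by (simp add: mult_add_distrib_mat_vec[OF Q z y] add_scalar_prod_distrib[OF z y]
        scalar_prod_add_distrib[of _ n])
  ultimately show ?thesis unfolding objective_def by simp
qed

lemma objective_diff:
  fixes Q :: "int mat"
  assumes Q: "Q \<in> carrier_mat n n" and Qsym: "transpose_mat Q = Q"
    and z: "z \<in> carrier_vec n" and y: "y \<in> carrier_vec n"
  shows "objective Q (z - y) = objective Q z - 2 * (y \<bullet> (Q *\<^sub>v z)) + y \<bullet> (Q *\<^sub>v y)"
proof -
  have "Q *\<^sub>v (- y) = - (Q *\<^sub>v y)"
    using Q y by (intro eq_vecI) auto
  then show ?thesis
    using objective_add[OF Q Qsym z, of "- y"] minus_add_uminus_vec[OF z y] Q y z by simp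
qed

lemma optimal_shift_if_quadratic_form_vanishes:
  fixes Q :: "int mat"
  assumes Q: "Q \<in> carrier_mat n n" and Qsym: "transpose_mat Q = Q" and A: "A \<in> carrier_mat m n"
    and y: "y \<in> carrier_vec n" and yQy: "y \<bullet> (Q *\<^sub>v y) = 0"
    and opt: "optimal Q A b C d z"
    and plus: "feasible A b C d (z + y)" and minus: "feasible A b C d (z - y)"
  shows "optimal Q A b C d (z + y)" "optimal Q A b C d (z - y)"
proof -
  have z: "z \<in> carrier_vec n" using opt A by (auto simp: optimal_def feasible_def)
  have "objective Q z \<le> objective Q (z + y)" "objective Q z \<le> objective Q (z - y)"
    using opt plus minus unfolding optimal_def by auto
  then have "objective Q (z + y) = objective Q z" "objective Q (z - y) = objective Q z"
    using objective_add[OF Q Qsym z y] objective_diff[OF Q Qsym z y] yQy by linarith+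
  then show "optimal Q A b C d (z + y)" "optimal Q A b C d (z - y)"
    using opt plus minus unfolding optimal_def by auto
qed

lemma closed_under_int_multiples:
  fixes P :: "'a :: comm_ring_1 vec \<Rightarrow> bool"
  assumes carrier: "\<And>z. P z \<Longrightarrow> z \<in> carrier_vec n" and v: "v \<in> carrier_vec n"
    and plus: "\<And>z. P z \<Longrightarrow> P (z + v)" and minus: "\<And>z. P z \<Longrightarrow> P (z - v)"
    and z: "P z"
  shows "P (z + of_int c \<cdot>\<^sub>v v)"
proof (induction c rule: int_induct[of _ 0])
  case base
  have "z + of_int 0 \<cdot>\<^sub>v v = z" using carrier[OF z] v by (intro eq_vecI) auto
  then show ?case using z by simp
next
  case (step1 c)
  have "z + of_int (c + 1) \<cdot>\<^sub>v v = (z + of_int c \<cdot>\<^sub>v v) + v"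
    using carrier[OF z] v by (intro eq_vecI) (auto simp: algebra_simps)
  then show ?case using plus[OF step1.IH] by simp
next
  case (step2 c)
  have "z + of_int (c - 1) \<cdot>\<^sub>v v = (z + of_int c \<cdot>\<^sub>v v) - v"
    using carrier[OF z] v by (intro eq_vecI) (auto simp: algebra_simps)
  then show ?case using minus[OF step2.IH] by simp
qed

lemma closed_under_lattice:
  fixes P :: "int vec \<Rightarrow> bool" and Y :: "int mat"
  assumes carrier: "\<And>z. P z \<Longrightarrow> z \<in> carrier_vec n" and Y: "Y \<in> carrier_mat n r"
    and shift: "\<And>j c z. j < r \<Longrightarrow> P z \<Longrightarrow> P (z + c \<cdot>\<^sub>v col Y j)"
    and z: "P z" and lam: "lam \<in> carrier_vec r"
  shows "P (z + Y *\<^sub>v lam)"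
proof -
  define prefix where "prefix k = vec r (\<lambda>i. if i < k then lam $ i else 0)" for k
  have prefix_carrier: "prefix k \<in> carrier_vec r" for k unfolding prefix_def by simp
  have "P (z + Y *\<^sub>v prefix k)" if "k \<le> r" for k
    using that
  proof (induction k)
    case 0
    have "Y *\<^sub>v prefix 0 = 0\<^sub>v n"
      using Y unfolding prefix_def by (intro eq_vecI) (auto simp: scalar_prod_def)
    then show ?case using z carrier[OF z] by simp
  next
    case (Suc k)
    then have k: "k < r" by simp
    have "prefix (Suc k) = prefix k + (lam $ k) \<cdot>\<^sub>v unit_vec r k"
      unfolding prefix_def by (intro eq_vecI) (auto simp: unit_vec_def less_Suc_eq)
    moreover have "Y *\<^sub>v ((lam $ k) \<cdot>\<^sub>v unit_vec r k) = (lam $ k) \<cdot>\<^sub>v col Y k"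
      using Y k by (intro eq_vecI) auto
    ultimately have "z + Y *\<^sub>v prefix (Suc k) = (z + Y *\<^sub>v prefix k) + (lam $ k) \<cdot>\<^sub>v col Y k"
      using mult_add_distrib_mat_vec[OF Y prefix_carrier, of "(lam $ k) \<cdot>\<^sub>v unit_vec r k"]
        carrier[OF z] Y k prefix_carrier[of k] by (simp add: assoc_add_vec)
    then show ?case using shift[OF k Suc.IH] Suc.prems by simp
  qed
  moreover have "prefix r = lam" using lam unfolding prefix_def by (intro eq_vecI) auto
  ultimately show ?thesis by blast
qed

theorem corollary1:
  fixes Q A C Y :: "int mat" and b d :: "int vec" and n m p r :: nat
  assumes Q: "Q \<in> carrier_mat n n" and Qsym: "transpose_mat Q = Q"
    and A: "A \<in> carrier_mat m n" and b: "b \<in> carrier_vec m"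
    and C: "C \<in> carrier_mat p n" and d: "d \<in> carrier_vec p"
    and Cind: "rows_lin_indep C"
    and Y: "Y \<in> carrier_mat n r" and Ybasis: "nullspace_basis C Y"
    and Ybound: "\<forall>i < n. \<forall>j < r. \<bar>Y $$ (i, j)\<bar> \<le> (max_subdet C)\<^sup>2"
    and ex_opt: "\<exists>x. optimal Q A b C d x"
    and all_deep: "\<forall>x. optimal Q A b C d x \<longrightarrow> deep A b C d Y x"
    and dep: "\<forall>j < r. \<exists>u \<in> carrier_vec p.
                 transpose_mat (rmat Q) *\<^sub>v rvec (col Y j) = transpose_mat (rmat C) *\<^sub>v u"
  shows "\<forall>xs lam. optimal Q A b C d xs \<and> lam \<in> carrier_vec r \<longrightarrow>
           optimal Q A b C d (xs + Y *\<^sub>v lam)"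
proof (intro allI impI, elim conjE)
  let ?opt = "optimal Q A b C d"
  have carrier: "z \<in> carrier_vec n" if "?opt z" for z
    using that A by (auto simp: optimal_def feasible_def)
  have shift_col: "?opt (z + col Y j)" "?opt (z - col Y j)" if j: "j < r" and z: "?opt z" for j z
  proof -
    have y: "col Y j \<in> carrier_vec n" using Y j by simp
    have "C * Y = 0\<^sub>m p r" using Ybasis C Y unfolding nullspace_basis_def by auto
    then have "C *\<^sub>v col Y j = 0\<^sub>v p" using col_mult2[OF C Y j] j by simp
    moreover obtain u where "u \<in> carrier_vec p"
      "transpose_mat (rmat Q) *\<^sub>v rvec (col Y j) = transpose_mat (rmat C) *\<^sub>v u"
      using dep j by blast
    ultimately have "col Y j \<bullet> (Q *\<^sub>v col Y j) = 0"
      using quadratic_form_vanishes_on_nullspace[OF Q C y] by blast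
    moreover have "feasible A b C d (z + col Y j)" "feasible A b C d (z - col Y j)"
      using all_deep z j Y unfolding deep_def by auto
    ultimately show "?opt (z + col Y j)" "?opt (z - col Y j)"
      using optimal_shift_if_quadratic_form_vanishes[OF Q Qsym A y _ z] by auto
  qed
  have "?opt (z + c \<cdot>\<^sub>v col Y j)" if "j < r" "?opt z" for j c z
    using closed_under_int_multiples[of ?opt n "col Y j" z c] carrier shift_col that Y by simp
  then show "?opt (xs + Y *\<^sub>v lam)" if "?opt xs" "lam \<in> carrier_vec r" for xs lam
    using closed_under_lattice[OF carrier Y] that by blast
qed

end
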